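(* In the setting below, for every $m\in\mathbb N$ and $t\in\mathbb C$, $$\sum_{k=0}^n(-1)^kP_{\sigma_{\tau(m),k}}(t)=-c(n)\dim(\tau(m)).$$
   Context: $G=\mathrm{Spin}(2n+1,1)$, $M=\mathrm{Spin}(2n)$. Cartan subalgebra spanned by $H_1=E_{1,2}+E_{2,1}$ and $H_i=\sqrt{-1}(E_{2i-1,2i}-E_{2i,2i-1})$ ($2\le i\le n+1$); $e_i(H_j)=\delta_{ij}$; positive roots $\Delta^+=\{e_i\pm e_j:i<j\}$; $\rho_j=n+1-j$, $\rho_G=\sum_{j=1}^{n+1}\rho_je_j$, $\rho_M=\sum_{j=2}^{n+1}\rho_je_j$; $\langle\cdot,\cdot\rangle$ is the form with $e_i$ orthonormal. For $\sigma\in\widehat M$ with highest weight $\Lambda(\sigma)=\sum_{i=2}^{n+1}k_ie_i$, $P_\sigma(z)=-c(n)\prod_{\alpha\in\Delta^+}\frac{\langle ze_1+\Lambda(\sigma)+\rho_M,\alpha\rangle}{\langle\rho_G,\alpha\rangle}$ with $c(n)>0$ a constant depending only on $n$. Fix integers $\tau_1\ge\dots\ge\tau_{n+1}\ge0$; $\tau(m)$ is the representation of $G$ with highest weight $\sum_{i=1}^{n+1}(\tau_i+m)e_i$, and for $k=0,\dots,n$, $\sigma_{\tau(m),k}\in\widehat M$ has highest weight $(\tau_1+m+1)e_2+\dots+(\tau_k+m+1)e_{k+1}+(\tau_{k+2}+m)e_{k+2}+\dots+(\tau_{n+1}+m)e_{n+1}$. *)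

theory Defs
  imports Complex_Main
begin

text \<open>Weights are functions nat => complex; coordinate j is the coefficient of e_j,
  only coordinates 1..n+1 are relevant (all weights considered vanish elsewhere).\<close>

definition ebasis :: "nat \<Rightarrow> nat \<Rightarrow> complex" where
  "ebasis i = (\<lambda>j. if j = i then 1 else 0)"

definition wplus :: "(nat \<Rightarrow> complex) \<Rightarrow> (nat \<Rightarrow> complex) \<Rightarrow> nat \<Rightarrow> complex" where
  "wplus x y = (\<lambda>j. x j + y j)"

definition wminus :: "(nat \<Rightarrow> complex) \<Rightarrow> (nat \<Rightarrow> complex) \<Rightarrow> nat \<Rightarrow> complex" where
  "wminus x y = (\<lambda>j. x j - y j)"

definition wscale :: "complex \<Rightarrow> (nat \<Rightarrow> complex) \<Rightarrow> nat \<Rightarrow> complex" where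
  "wscale z x = (\<lambda>j. z * x j)"

definition winner :: "nat \<Rightarrow> (nat \<Rightarrow> complex) \<Rightarrow> (nat \<Rightarrow> complex) \<Rightarrow> complex" where
  "winner n x y = (\<Sum>j = 1..n+1. x j * y j)"

definition pos_roots :: "nat \<Rightarrow> (nat \<Rightarrow> complex) set" where
  "pos_roots n =
     {wplus (ebasis i) (ebasis j) | i j. 1 \<le> i \<and> i < j \<and> j \<le> n + 1} \<union>
     {wminus (ebasis i) (ebasis j) | i j. 1 \<le> i \<and> i < j \<and> j \<le> n + 1}"

definition rho_G :: "nat \<Rightarrow> nat \<Rightarrow> complex" where
  "rho_G n = (\<lambda>j. if 1 \<le> j \<and> j \<le> n + 1 then of_nat (n + 1 - j) else 0)"

definition rho_M :: "nat \<Rightarrow> nat \<Rightarrow> complex" where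
  "rho_M n = (\<lambda>j. if 2 \<le> j \<and> j \<le> n + 1 then of_nat (n + 1 - j) else 0)"

text \<open>P_sigma(z) for sigma in hat M with highest weight Lam (supported on 2..n+1).\<close>
definition P_sigma :: "nat \<Rightarrow> real \<Rightarrow> (nat \<Rightarrow> complex) \<Rightarrow> complex \<Rightarrow> complex" where
  "P_sigma n c Lam z =
     - complex_of_real c *
       (\<Prod>\<alpha>\<in>pos_roots n.
          winner n (wplus (wplus (wscale z (ebasis 1)) Lam) (rho_M n)) \<alpha> / winner n (rho_G n) \<alpha>)"

text \<open>Dimension of the irreducible representation of G with highest weight lam
  (Weyl dimension formula).\<close>
definition dim_G :: "nat \<Rightarrow> (nat \<Rightarrow> complex) \<Rightarrow> complex" where
  "dim_G n lam = (\<Prod>\<alpha>\<in>pos_roots n. winner n (wplus lam (rho_G n)) \<alpha> / winner n (rho_G n) \<alpha>)"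

definition tau_weight :: "nat \<Rightarrow> (nat \<Rightarrow> int) \<Rightarrow> nat \<Rightarrow> nat \<Rightarrow> complex" where
  "tau_weight n tau m = (\<lambda>j. if 1 \<le> j \<and> j \<le> n + 1 then of_int (tau j + int m) else 0)"

definition sigma_weight :: "nat \<Rightarrow> (nat \<Rightarrow> int) \<Rightarrow> nat \<Rightarrow> nat \<Rightarrow> nat \<Rightarrow> complex" where
  "sigma_weight n tau m k = (\<lambda>j.
     if 2 \<le> j \<and> j \<le> k + 1 then of_int (tau (j - 1) + int m + 1)
     else if k + 2 \<le> j \<and> j \<le> n + 1 then of_int (tau j + int m)
     else 0)"

end

theory Submission
  imports Defs "HOL-Computational_Algebra.Polynomial"
begin

text \<open>Since \<open>\<langle>x, e\<^sub>i + e\<^sub>j\<rangle>\<langle>x, e\<^sub>i - e\<^sub>j\<rangle> = x\<^sub>i\<^sup>2 - x\<^sub>j\<^sup>2\<close>, both \<open>P\<^sub>\<sigma>\<close> and the Weyl dimension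
  formula are, up to the common factor \<open>\<Prod>\<langle>\<rho>\<^sub>G, \<alpha>\<rangle>\<close>, Vandermonde products in the squares of
  the coordinates of \<open>z e\<^sub>1 + \<Lambda>(\<sigma>) + \<rho>\<^sub>M\<close> resp. \<open>\<Lambda>(\<tau>(m)) + \<rho>\<^sub>G\<close>. Put \<open>a\<^sub>0 = t\<close> and
  \<open>a\<^sub>q = \<tau>\<^sub>q + m + n + 1 - q\<close>: then \<open>\<sigma>\<^sub>\<tau>\<^sub>(\<^sub>m\<^sub>)\<^sub>,\<^sub>k\<close> contributes the points \<open>a\<^sub>0, \<dots>, a\<^sub>n\<^sub>+\<^sub>1\<close>
  with \<open>a\<^sub>k\<^sub>+\<^sub>1\<close> omitted, and \<open>\<tau>(m)\<close> the points \<open>a\<^sub>1, \<dots>, a\<^sub>n\<^sub>+\<^sub>1\<close>. Splitting off the factors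
  involving \<open>a\<^sub>0\<close>, the alternating sum becomes the Lagrange interpolation of the constant \<open>1\<close>
  at the nodes \<open>a\<^sub>1\<^sup>2, \<dots>, a\<^sub>n\<^sub>+\<^sub>1\<^sup>2\<close>, which are distinct because \<open>\<tau>\<close> is dominant.\<close>

definition ordered_pairs :: "nat set \<Rightarrow> (nat \<times> nat) set" where
  "ordered_pairs S = {(i, j). i \<in> S \<and> j \<in> S \<and> i < j}"

definition vandermonde :: "(nat \<Rightarrow> 'a::comm_ring_1) \<Rightarrow> nat set \<Rightarrow> 'a" where
  "vandermonde y S = (\<Prod>(i, j)\<in>ordered_pairs S. y i - y j)"

lemma finite_ordered_pairs: "finite S \<Longrightarrow> finite (ordered_pairs S)"
  by (rule finite_subset[of _ "S \<times> S"]) (auto simp: ordered_pairs_def)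

lemma vandermonde_cong: "(\<And>i. i \<in> S \<Longrightarrow> y i = y' i) \<Longrightarrow> vandermonde y S = vandermonde y' S"
  unfolding vandermonde_def by (rule prod.cong) (auto simp: ordered_pairs_def)

lemma vandermonde_insert:
  fixes y :: "nat \<Rightarrow> 'a::comm_ring_1"
  assumes "finite S" "l \<notin> S"
  shows "vandermonde y (insert l S) =
           vandermonde y S * (-1) ^ card {i\<in>S. i < l} * (\<Prod>i\<in>S. y l - y i)"
proof -
  let ?L = "{i\<in>S. i < l}" and ?U = "{j\<in>S. l < j}"
  have pairs: "ordered_pairs (insert l S) =
      ordered_pairs S \<union> ((\<lambda>i. (i, l)) ` ?L \<union> (\<lambda>j. (l, j)) ` ?U)"
    using assms(2) by (auto simp: ordered_pairs_def)
  have S_split: "S = ?L \<union> ?U"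
    using assms(2) by auto (metis linorder_neqE_nat)
  have "vandermonde y (insert l S) = vandermonde y S *
      ((\<Prod>(i, j)\<in>(\<lambda>i. (i, l)) ` ?L. y i - y j) * (\<Prod>(i, j)\<in>(\<lambda>j. (l, j)) ` ?U. y i - y j))"
    unfolding vandermonde_def pairs using assms finite_ordered_pairs[OF assms(1)]
    by (subst prod.union_disjoint, auto simp: ordered_pairs_def,
        subst prod.union_disjoint, auto)
  also have "(\<Prod>(i, j)\<in>(\<lambda>i. (i, l)) ` ?L. y i - y j) = (\<Prod>i\<in>?L. y i - y l)"
    by (subst prod.reindex) (auto simp: inj_on_def)
  also have "(\<Prod>(i, j)\<in>(\<lambda>j. (l, j)) ` ?U. y i - y j) = (\<Prod>j\<in>?U. y l - y j)"
    by (subst prod.reindex) (auto simp: inj_on_def)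
  also have "(\<Prod>i\<in>?L. y i - y l) = (-1) ^ card ?L * (\<Prod>i\<in>?L. y l - y i)"
    by (rule prod_diff_swap)
  also have "(\<Prod>i\<in>S. y l - y i) = (\<Prod>i\<in>?L. y l - y i) * (\<Prod>j\<in>?U. y l - y j)"
    using assms(1) by (subst S_split, subst prod.union_disjoint) auto
  ultimately show ?thesis
    by (simp add: algebra_simps)
qed

lemma vandermonde_reindex:
  assumes "strict_mono_on A \<phi>"
  shows "vandermonde (\<lambda>p. y (\<phi> p)) A = vandermonde y (\<phi> ` A)"
proof -
  let ?\<Phi> = "\<lambda>(p, q). (\<phi> p, \<phi> q)"
  have "ordered_pairs (\<phi> ` A) = ?\<Phi> ` ordered_pairs A"
  proof (intro equalityI subsetI)
    fix x assume "x \<in> ordered_pairs (\<phi> ` A)"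
    then obtain p q where "p \<in> A" "q \<in> A" "\<phi> p < \<phi> q" "x = (\<phi> p, \<phi> q)"
      by (auto simp: ordered_pairs_def)
    moreover from this have "p < q"
      using strict_mono_on_less[OF assms] by blast
    ultimately show "x \<in> ?\<Phi> ` ordered_pairs A"
      by (auto simp: ordered_pairs_def image_iff intro!: bexI[of _ "(p, q)"])
  qed (use strict_mono_onD[OF assms] in \<open>auto simp: ordered_pairs_def\<close>)
  moreover have "inj_on ?\<Phi> (ordered_pairs A)"
    using strict_mono_on_imp_inj_on[OF assms] by (auto simp: inj_on_def ordered_pairs_def)
  ultimately show ?thesis
    unfolding vandermonde_def by (simp add: prod.reindex) (simp add: case_prod_beta)
qed

lemma lagrange_basis_sum_eq_one:
  fixes b :: "'b \<Rightarrow> 'a::field"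
  assumes fin: "finite W" and ne: "W \<noteq> {}" and inj: "inj_on b W"
  shows "(\<Sum>l\<in>W. (\<Prod>i\<in>W-{l}. s - b i) / (\<Prod>i\<in>W-{l}. b l - b i)) = 1"
proof -
  define p where
    "p = (\<Sum>l\<in>W. smult (1 / (\<Prod>i\<in>W-{l}. b l - b i)) (\<Prod>i\<in>W-{l}. [:- b i, 1:]))"
  have poly_p: "poly p x = (\<Sum>l\<in>W. (\<Prod>i\<in>W-{l}. x - b i) / (\<Prod>i\<in>W-{l}. b l - b i))" for x
    by (simp add: p_def poly_sum poly_prod)
  have "degree p \<le> card W - 1"
    unfolding p_def
  proof (rule degree_sum_le[OF fin], rule order.trans[OF degree_smult_le])
    fix l assume "l \<in> W"
    have "degree (\<Prod>i\<in>W-{l}. [:- b i, 1:]) \<le> sum (degree \<circ> (\<lambda>i. [:- b i, 1:])) (W - {l})"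
      by (rule degree_prod_sum_le) (use fin in auto)
    also have "\<dots> = card W - 1"
      using \<open>l \<in> W\<close> fin by simp
    finally show "degree (\<Prod>i\<in>W-{l}. [:- b i, 1:]) \<le> card W - 1" .
  qed
  moreover have "card W > 0"
    using fin ne by (simp add: card_gt_0_iff)
  ultimately have deg: "degree p < card (b ` W)"
    using card_image[OF inj] by simp
  have "poly p x = poly 1 x" if "x \<in> b ` W" for x
  proof -
    from that obtain j where j: "j \<in> W" "x = b j" by auto
    have others: "(\<Prod>i\<in>W-{l}. b j - b i) = 0" if "l \<in> W - {j}" for l
      using that j fin by (intro prod_zero) auto
    have "(\<Prod>i\<in>W-{j}. b j - b i) \<noteq> 0"
      using inj j fin by (auto simp: inj_on_def prod_zero_iff)
    then show ?thesis
      unfolding poly_p j(2) sum.remove[OF fin j(1)] using others by simp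
  qed
  then have "p = 1"
    by (rule poly_eqI_degree) (use deg in auto)
  then show ?thesis
    using poly_p[of s] by simp
qed

lemma alternating_sum_vandermonde_remove:
  fixes y :: "nat \<Rightarrow> 'a::field"
  assumes inj: "inj_on y {1..Suc n}"
  shows "(\<Sum>k=0..n. (-1) ^ k * vandermonde y ({0..Suc n} - {Suc k})) = vandermonde y {1..Suc n}"
proof -
  let ?W = "{1..Suc n}"
  let ?D = "vandermonde y ?W"
  have term_eq: "(-1) ^ (l - 1) * vandermonde y ({0..Suc n} - {l}) =
      ?D * ((\<Prod>i\<in>?W-{l}. y 0 - y i) / (\<Prod>i\<in>?W-{l}. y l - y i))" if l: "l \<in> ?W" for l
  proof -
    have "{0..Suc n} - {l} = insert 0 (?W - {l})"
      using l by auto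
    then have remove_l:
      "vandermonde y ({0..Suc n} - {l}) = vandermonde y (?W - {l}) * (\<Prod>i\<in>?W-{l}. y 0 - y i)"
      by (simp add: vandermonde_insert)
    have "?D = vandermonde y (insert l (?W - {l}))"
      using l by (simp add: insert_absorb)
    also have "\<dots> = vandermonde y (?W - {l}) * (-1) ^ card {i \<in> ?W - {l}. i < l} *
        (\<Prod>i\<in>?W-{l}. y l - y i)"
      by (rule vandermonde_insert) auto
    also have "{i \<in> ?W - {l}. i < l} = {1..<l}"
      using l by auto
    finally have D_eq: "?D = vandermonde y (?W - {l}) * (-1) ^ (l - 1) * (\<Prod>i\<in>?W-{l}. y l - y i)"
      by simp
    have "(\<Prod>i\<in>?W-{l}. y l - y i) \<noteq> 0"
      using inj l by (auto simp: inj_on_def prod_zero_iff)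
    moreover have "((-1::'a) ^ (l - 1)) * (-1) ^ (l - 1) = 1"
      by (simp add: power_mult_distrib[symmetric])
    ultimately show ?thesis
      unfolding remove_l D_eq by (simp add: field_simps)
  qed
  have "(\<Sum>k=0..n. (-1) ^ k * vandermonde y ({0..Suc n} - {Suc k})) =
        (\<Sum>l\<in>?W. (-1) ^ (l - 1) * vandermonde y ({0..Suc n} - {l}))"
    using sum.shift_bounds_cl_Suc_ivl[of "\<lambda>l. (-1) ^ (l - 1) * vandermonde y ({0..Suc n} - {l})" 0 n]
    by simp
  also have "\<dots> = ?D * (\<Sum>l\<in>?W. (\<Prod>i\<in>?W-{l}. y 0 - y i) / (\<Prod>i\<in>?W-{l}. y l - y i))"
    unfolding sum_distrib_left by (rule sum.cong[OF refl term_eq])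
  also have "\<dots> = ?D"
    using lagrange_basis_sum_eq_one[OF _ _ inj, of "y 0"] by simp
  finally show ?thesis .
qed

lemma winner_ebasis:
  assumes "i \<in> {1..n+1}"
  shows "winner n x (ebasis i) = x i"
  using assms by (simp add: winner_def ebasis_def if_distrib cong: if_cong)

lemma winner_wplus: "winner n x (wplus u v) = winner n x u + winner n x v"
  by (simp add: winner_def wplus_def distrib_left sum.distrib)

lemma winner_wminus: "winner n x (wminus u v) = winner n x u - winner n x v"
  by (simp add: winner_def wminus_def right_diff_distrib sum_subtractf)

lemma prod_pos_roots:
  "(\<Prod>\<alpha>\<in>pos_roots n. f \<alpha>) =
     (\<Prod>(i, j)\<in>ordered_pairs {1..n+1}. f (wplus (ebasis i) (ebasis j)) * f (wminus (ebasis i) (ebasis j)))"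
proof -
  let ?P = "ordered_pairs {1..n+1}"
  let ?plus = "\<lambda>(i, j). wplus (ebasis i) (ebasis j)"
  let ?minus = "\<lambda>(i, j). wminus (ebasis i) (ebasis j)"
  have fin: "finite ?P"
    by (simp add: finite_ordered_pairs)
  have roots: "pos_roots n = ?plus ` ?P \<union> ?minus ` ?P"
    unfolding pos_roots_def ordered_pairs_def by auto
  have inj_plus: "inj_on ?plus ?P"
  proof (rule inj_onI, clarify)
    fix i j k l assume pairs: "(i, j) \<in> ?P" "(k, l) \<in> ?P"
      and "wplus (ebasis i) (ebasis j) = wplus (ebasis k) (ebasis l)"
    then have "\<And>q. wplus (ebasis i) (ebasis j) q = wplus (ebasis k) (ebasis l) q" by simp
    from this[of i] this[of j] this[of k] this[of l] pairs show "i = k \<and> j = l"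
      by (auto simp: wplus_def ebasis_def ordered_pairs_def split: if_splits)
  qed
  have inj_minus: "inj_on ?minus ?P"
  proof (rule inj_onI, clarify)
    fix i j k l assume pairs: "(i, j) \<in> ?P" "(k, l) \<in> ?P"
      and "wminus (ebasis i) (ebasis j) = wminus (ebasis k) (ebasis l)"
    then have "\<And>q. wminus (ebasis i) (ebasis j) q = wminus (ebasis k) (ebasis l) q" by simp
    from this[of i] this[of j] pairs show "i = k \<and> j = l"
      by (auto simp: wminus_def ebasis_def ordered_pairs_def split: if_splits)
  qed
  have disjoint: "?plus ` ?P \<inter> ?minus ` ?P = {}"
  proof (rule ccontr)
    assume "?plus ` ?P \<inter> ?minus ` ?P \<noteq> {}"
    then obtain i j k l where pairs: "(i, j) \<in> ?P" "(k, l) \<in> ?P"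
      and "wplus (ebasis i) (ebasis j) = wminus (ebasis k) (ebasis l)" by auto
    \<comment> \<open>compare the \<open>l\<close>-th coordinates: \<open>-1\<close> on the right, \<open>0\<close>, \<open>1\<close> or \<open>2\<close> on the left\<close>
    then have "wplus (ebasis i) (ebasis j) l = wminus (ebasis k) (ebasis l) l" by simp
    with pairs show False
      by (auto simp: wplus_def wminus_def ebasis_def ordered_pairs_def split: if_splits)
  qed
  have "(\<Prod>\<alpha>\<in>pos_roots n. f \<alpha>) = prod f (?plus ` ?P) * prod f (?minus ` ?P)"
    unfolding roots using fin disjoint by (intro prod.union_disjoint finite_imageI)
  also have "\<dots> = prod (f \<circ> ?plus) ?P * prod (f \<circ> ?minus) ?P"
    by (simp only: prod.reindex[OF inj_plus] prod.reindex[OF inj_minus])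
  finally show ?thesis
    by (simp add: prod.distrib case_prod_beta comp_def)
qed

lemma prod_pos_roots_winner_ratio:
  "(\<Prod>\<alpha>\<in>pos_roots n. winner n x \<alpha> / winner n r \<alpha>) =
     vandermonde (\<lambda>i. (x i)\<^sup>2) {1..n+1} / vandermonde (\<lambda>i. (r i)\<^sup>2) {1..n+1}"
proof -
  have "(\<Prod>\<alpha>\<in>pos_roots n. winner n x \<alpha> / winner n r \<alpha>) =
      (\<Prod>(i, j)\<in>ordered_pairs {1..n+1}. ((x i)\<^sup>2 - (x j)\<^sup>2) / ((r i)\<^sup>2 - (r j)\<^sup>2))"
    unfolding prod_pos_roots
    by (rule prod.cong[OF refl])
      (auto simp: ordered_pairs_def winner_wplus winner_wminus winner_ebasis power2_eq_square
        algebra_simps)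
  then show ?thesis
    unfolding vandermonde_def by (simp add: prod_dividef case_prod_beta)
qed

definition shifted_coord :: "nat \<Rightarrow> (nat \<Rightarrow> int) \<Rightarrow> nat \<Rightarrow> complex \<Rightarrow> nat \<Rightarrow> complex" where
  "shifted_coord n tau m t q = (if q = 0 then t else of_int (tau q + int m + int (n + 1 - q)))"

definition sigma_index :: "nat \<Rightarrow> nat \<Rightarrow> nat" where
  "sigma_index k p = (if p = 1 then 0 else if p \<le> k + 1 then p - 1 else p)"

lemma strict_mono_on_sigma_index: "strict_mono_on {1..n+1} (sigma_index k)"
  by (rule strict_mono_onI) (auto simp: sigma_index_def)

lemma sigma_index_image:
  assumes "k \<le> n"
  shows "sigma_index k ` {1..n+1} = {0..Suc n} - {Suc k}"
proof (intro equalityI subsetI)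
  fix v assume v: "v \<in> {0..Suc n} - {Suc k}"
  consider "v = 0" | "1 \<le> v \<and> v \<le> k" | "k + 2 \<le> v"
    using v by force
  then show "v \<in> sigma_index k ` {1..n+1}"
  proof cases
    case 1
    then show ?thesis by (intro image_eqI[of _ _ 1]) (auto simp: sigma_index_def)
  next
    case 2
    then show ?thesis using assms by (intro image_eqI[of _ _ "v + 1"]) (auto simp: sigma_index_def)
  next
    case 3
    then show ?thesis using v by (intro image_eqI[of _ _ v]) (auto simp: sigma_index_def)
  qed
qed (auto simp: sigma_index_def)

lemma sigma_weight_shifted_coord:
  assumes "k \<le> n" and "p \<in> {1..n+1}"
  shows "wplus (wplus (wscale t (ebasis 1)) (sigma_weight n tau m k)) (rho_M n) p =
           shifted_coord n tau m t (sigma_index k p)"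
proof -
  consider "p = 1" | "2 \<le> p \<and> p \<le> k + 1" | "k + 2 \<le> p"
    using assms(2) by force
  then show ?thesis
  proof cases
    case 2
    then have "int (n + 1 - (p - 1)) = int (n + 1 - p) + 1"
      using assms by auto
    with 2 assms show ?thesis
      by (simp add: wplus_def wscale_def ebasis_def sigma_weight_def rho_M_def shifted_coord_def
          sigma_index_def)
  qed (use assms in \<open>simp_all add: wplus_def wscale_def ebasis_def sigma_weight_def rho_M_def
      shifted_coord_def sigma_index_def\<close>)
qed

lemma P_sigma_sigma_weight:
  assumes "k \<le> n"
  shows "P_sigma n c (sigma_weight n tau m k) t =
           - complex_of_real c *
             (vandermonde (\<lambda>q. (shifted_coord n tau m t q)\<^sup>2) ({0..Suc n} - {Suc k}) /
              vandermonde (\<lambda>i. (rho_G n i)\<^sup>2) {1..n+1})"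
proof -
  have "vandermonde (\<lambda>i. (wplus (wplus (wscale t (ebasis 1)) (sigma_weight n tau m k)) (rho_M n) i)\<^sup>2)
          {1..n+1} = vandermonde (\<lambda>p. (shifted_coord n tau m t (sigma_index k p))\<^sup>2) {1..n+1}"
    by (intro vandermonde_cong arg_cong[where f = "\<lambda>z. z\<^sup>2"] sigma_weight_shifted_coord[OF assms])
  also have "\<dots> = vandermonde (\<lambda>q. (shifted_coord n tau m t q)\<^sup>2) ({0..Suc n} - {Suc k})"
    using vandermonde_reindex[OF strict_mono_on_sigma_index, of "\<lambda>q. (shifted_coord n tau m t q)\<^sup>2"]
      sigma_index_image[OF assms] by simp
  finally show ?thesis
    unfolding P_sigma_def prod_pos_roots_winner_ratio by simp
qed

lemma dim_G_tau_weight: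
  "dim_G n (tau_weight n tau m) =
     vandermonde (\<lambda>q. (shifted_coord n tau m t q)\<^sup>2) {1..Suc n} /
     vandermonde (\<lambda>i. (rho_G n i)\<^sup>2) {1..n+1}"
proof -
  have "vandermonde (\<lambda>i. (wplus (tau_weight n tau m) (rho_G n) i)\<^sup>2) {1..n+1} =
        vandermonde (\<lambda>q. (shifted_coord n tau m t q)\<^sup>2) {1..n+1}"
    by (rule vandermonde_cong) (auto simp: wplus_def tau_weight_def rho_G_def shifted_coord_def)
  then show ?thesis
    unfolding dim_G_def prod_pos_roots_winner_ratio by simp
qed

lemma inj_on_shifted_coord_squares:
  assumes dominant: "\<And>i. 1 \<le> i \<Longrightarrow> i \<le> n \<Longrightarrow> tau (i + 1) \<le> tau i"
    and nonneg: "tau (n + 1) \<ge> 0"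
  shows "inj_on (\<lambda>q. (shifted_coord n tau m t q)\<^sup>2) {1..Suc n}"
proof -
  define a where "a q = tau q + int m + int (n + 1 - q)" for q
  have antimono: "tau j \<le> tau i" if "1 \<le> i" "i \<le> j" "j \<le> n + 1" for i j
    using that(2,3)
  proof (induction j rule: dec_induct)
    case (step q)
    then show ?case using dominant[of q] that(1) by simp
  qed simp
  have coord: "shifted_coord n tau m t q = of_int (a q)" if "q \<in> {1..Suc n}" for q
    using that by (simp add: shifted_coord_def a_def)
  have a_nonneg: "a i \<ge> 0" if "i \<in> {1..Suc n}" for i
    using antimono[of i "n + 1"] that nonneg by (simp add: a_def)
  have a_strict: "a j < a i" if "i \<in> {1..Suc n}" "j \<in> {1..Suc n}" "i < j" for i j
    using antimono[of i j] that by (simp add: a_def)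
  show ?thesis
  proof (rule inj_onI)
    fix i j assume ij: "i \<in> {1..Suc n}" "j \<in> {1..Suc n}"
      and "(shifted_coord n tau m t i)\<^sup>2 = (shifted_coord n tau m t j)\<^sup>2"
    then have "of_int ((a i)\<^sup>2) = (of_int ((a j)\<^sup>2) :: complex)"
      by (simp only: coord of_int_power)
    then have "(a i)\<^sup>2 = (a j)\<^sup>2"
      by (simp only: of_int_eq_iff)
    then have "a i = a j"
      using a_nonneg ij by (simp add: power2_eq_iff_nonneg)
    then show "i = j"
      using a_strict ij by (metis linorder_neqE_nat less_irrefl)
  qed
qed

theorem corollary5p5:
  fixes n m :: nat and tau :: "nat \<Rightarrow> int" and c :: real and t :: complex
  assumes "n \<ge> 1"
    and "c > 0"
    and "\<And>i. 1 \<le> i \<Longrightarrow> i \<le> n \<Longrightarrow> tau (i + 1) \<le> tau i"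
    and "tau (n + 1) \<ge> 0"
  shows "(\<Sum>k = 0..n. (-1) ^ k * P_sigma n c (sigma_weight n tau m k) t)
           = - complex_of_real c * dim_G n (tau_weight n tau m)"
proof -
  \<comment> \<open>only dominance of \<open>\<tau>\<close> is used\<close>
  let ?y = "\<lambda>q. (shifted_coord n tau m t q)\<^sup>2"
  let ?C = "- complex_of_real c / vandermonde (\<lambda>i. (rho_G n i)\<^sup>2) {1..n+1}"
  have "(\<Sum>k = 0..n. (-1) ^ k * P_sigma n c (sigma_weight n tau m k) t)
      = ?C * (\<Sum>k = 0..n. (-1) ^ k * vandermonde ?y ({0..Suc n} - {Suc k}))"
    unfolding sum_distrib_left by (rule sum.cong) (simp_all add: P_sigma_sigma_weight)
  also have "\<dots> = ?C * vandermonde ?y {1..Suc n}"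
    using alternating_sum_vandermonde_remove[OF inj_on_shifted_coord_squares[OF assms(3,4)]]
    by simp
  also have "\<dots> = - complex_of_real c * dim_G n (tau_weight n tau m)"
    by (simp add: dim_G_tau_weight[where t = t])
  finally show ?thesis .
qed

end
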